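(* Let $N\ge1$, $D>0$, $b_1,\dots,b_N>0$, $0<r_1<\cdots<r_N$, and let $k_0$ be as in the context. For integers $k\ge k_0$ let $p^k\pm iq^k$ ($p^k,q^k\in\mathbb R$, $q^k>0$) be the two non-real roots of $P_N^k$. Then there are constants $M_2,M_3>0$ independent of $k$ such that for all sufficiently large $k\ge k_0$, $$\Big|p^k+\frac{1}{2D}\sum_{j=1}^N b_j\Big|\le\frac{M_2}{k^2},\qquad \big|q^k-(2k-1)\sqrt D\big|\le \frac{M_3}{2k-1}.$$
   Context: Standing assumptions: $N\in\mathbb N$, $D>0$, $b_i>0$, $0<r_1<\cdots<r_N$. $P_N^k(\lambda)=\big(D+\frac{\lambda^2}{(2k-1)^2}\big)\prod_{j=1}^N(\lambda+r_j)-\sum_{i=1}^N b_i\prod_{j\neq i}(\lambda+r_j)$ for $k\in\mathbb N$, a real polynomial of degree $N+2$. $k_0$ is a threshold such that for all integers $k\ge k_0$, $P_N^k$ has exactly $N$ real roots, all simple, interlacing with $-r_N<a_N^k<-r_{N-1}<\cdots<-r_1<a_1^k$, and its two remaining roots are simple non-real complex conjugates. *)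

theory Defs
  imports "HOL-Analysis.Analysis" "HOL-Computational_Algebra.Polynomial"
begin

definition PNk :: "nat \<Rightarrow> real \<Rightarrow> (nat \<Rightarrow> real) \<Rightarrow> (nat \<Rightarrow> real) \<Rightarrow> nat \<Rightarrow> real poly" where
  "PNk N D b r k =
     ([:D:] + [:0, 0, 1 / (2 * real k - 1)^2:]) * (\<Prod>j\<in>{1..N}. [:r j, 1:])
     - (\<Sum>i\<in>{1..N}. smult (b i) (\<Prod>j\<in>{1..N} - {i}. [:r j, 1:]))"

text \<open>The threshold property of k0 from the standing assumptions, for a fixed k.\<close>
definition root_structure :: "nat \<Rightarrow> (nat \<Rightarrow> real) \<Rightarrow> real poly \<Rightarrow> bool" where
  "root_structure N r P \<longleftrightarrow>
     P \<noteq> 0 \<and>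
     (\<exists>a :: nat \<Rightarrow> real.
        {x. poly P x = 0} = a ` {1..N} \<and> inj_on a {1..N} \<and>
        (\<forall>i\<in>{1..N}. order (a i) P = 1) \<and>
        -r 1 < a 1 \<and> (\<forall>i\<in>{2..N}. -r i < a i \<and> a i < -r (i - 1))) \<and>
     (\<exists>z :: complex. Im z \<noteq> 0 \<and>
        {w. poly (map_poly complex_of_real P) w = 0 \<and> Im w \<noteq> 0} = {z, cnj z} \<and>
        order z (map_poly complex_of_real P) = 1 \<and>
        order (cnj z) (map_poly complex_of_real P) = 1)"

end

theory Submission
  imports Defs
begin

text \<open>Write \<open>\<epsilon> = 1/(2k-1)\<^sup>2\<close>. Off the real axis, dividing \<open>P\<^sub>N\<^sup>k\<close> by
  \<open>\<Prod>(\<lambda> + r\<^sub>j)\<close> shows that a root \<open>z = x + iy\<close>, \<open>y > 0\<close>, solves the secular equation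
  \<open>D + \<epsilon>z\<^sup>2 = \<Sum> b\<^sub>j/(z + r\<^sub>j)\<close>. With \<open>d\<^sub>j = |z + r\<^sub>j|\<^sup>2\<close>, its imaginary part reads
  \<open>2\<epsilon>x = - \<Sum> b\<^sub>j/d\<^sub>j\<close>, so \<open>x < 0\<close>, and its real part then gives \<open>\<epsilon>y\<^sup>2 \<ge> D - 2\<epsilon>r\<^sub>N\<^sup>2 \<ge> D/2\<close>
  for large \<open>k\<close>. Hence every \<open>d\<^sub>j \<ge> D/(2\<epsilon>)\<close>, which bounds \<open>x\<close>, then
  \<open>y\<^sup>2 = D/\<epsilon> + O(1)\<close>, and finally \<open>1/d\<^sub>j = \<epsilon>/D + O(\<epsilon>\<^sup>2)\<close>; inserted into the imaginary part
  this gives \<open>x = - \<Sum> b\<^sub>j/(2D) + O(\<epsilon>)\<close>. The estimates hold for every root in the upper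
  half-plane.\<close>

lemma map_poly_of_real_add: "map_poly of_real (p + q) = map_poly of_real p + map_poly of_real q"
  by (rule poly_eqI) (simp add: coeff_map_poly)

lemma map_poly_of_real_diff: "map_poly of_real (p - q) = map_poly of_real p - map_poly of_real q"
  by (rule poly_eqI) (simp add: coeff_map_poly)

lemma map_poly_of_real_mult:
  "map_poly (of_real :: real \<Rightarrow> 'a::{real_algebra_1,comm_ring_1}) (p * q) =
     map_poly of_real p * map_poly of_real q"
  by (rule poly_eqI) (simp add: coeff_map_poly coeff_mult)

lemma map_poly_of_real_smult:
  "map_poly (of_real :: real \<Rightarrow> 'a::{real_algebra_1,comm_ring_1}) (smult c p) =
     smult (of_real c) (map_poly of_real p)"
  by (rule poly_eqI) (simp add: coeff_map_poly)

lemma map_poly_of_real_sum: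
  "map_poly of_real (\<Sum>i\<in>A. f i) = (\<Sum>i\<in>A. map_poly of_real (f i))"
  by (induction A rule: infinite_finite_induct) (auto simp: map_poly_of_real_add)

lemma map_poly_of_real_prod:
  "map_poly (of_real :: real \<Rightarrow> 'a::{real_algebra_1,comm_ring_1}) (\<Prod>i\<in>A. f i) =
     (\<Prod>i\<in>A. map_poly of_real (f i))"
  by (induction A rule: infinite_finite_induct) (auto simp: map_poly_of_real_mult)

lemma poly_PNk:
  "poly (map_poly complex_of_real (PNk N D b r k)) z =
     (of_real D + of_real (1 / (2 * real k - 1)^2) * z^2) * (\<Prod>j\<in>{1..N}. z + of_real (r j))
     - (\<Sum>i\<in>{1..N}. of_real (b i) * (\<Prod>j\<in>{1..N} - {i}. z + of_real (r j)))"
  unfolding PNk_def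
  by (simp add: map_poly_of_real_diff map_poly_of_real_add map_poly_of_real_mult
      map_poly_of_real_smult map_poly_of_real_sum map_poly_of_real_prod poly_sum poly_prod
      map_poly_pCons power2_eq_square algebra_simps)

lemma sum_prod_delete:
  fixes w :: "'i \<Rightarrow> 'a::field"
  assumes "finite A" and "\<And>j. j \<in> A \<Longrightarrow> w j \<noteq> 0"
  shows "(\<Sum>i\<in>A. c i * (\<Prod>j\<in>A - {i}. w j)) = (\<Prod>j\<in>A. w j) * (\<Sum>i\<in>A. c i / w i)"
  unfolding sum_distrib_left
proof (rule sum.cong)
  fix i assume "i \<in> A"
  then show "c i * (\<Prod>j\<in>A - {i}. w j) = (\<Prod>j\<in>A. w j) * (c i / w i)"
    using assms prod_diff1[of A w i] by simp
qed simp

lemma PNk_root_secular: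
  assumes "poly (map_poly complex_of_real (PNk N D b r k)) z = 0" and "Im z \<noteq> 0"
  shows "of_real D + of_real (1 / (2 * real k - 1)^2) * z^2 =
           (\<Sum>i\<in>{1..N}. of_real (b i) / (z + of_real (r i)))"
proof -
  have nz: "z + of_real (r j) \<noteq> 0" for j
  proof
    assume "z + of_real (r j) = 0"
    then have "Im (z + of_real (r j)) = 0" by simp
    with \<open>Im z \<noteq> 0\<close> show False by simp
  qed
  let ?c = "of_real D + of_real (1 / (2 * real k - 1)^2) * z^2"
  have "?c * (\<Prod>j\<in>{1..N}. z + of_real (r j)) =
          (\<Prod>j\<in>{1..N}. z + of_real (r j)) * (\<Sum>i\<in>{1..N}. of_real (b i) / (z + of_real (r i)))"
    using assms(1) unfolding poly_PNk sum_prod_delete[OF finite_atLeastAtMost nz] by simp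
  then show ?thesis
    using nz by (simp add: mult.commute)
qed

locale upper_secular_root =
  fixes A :: "'i set" and b r :: "'i \<Rightarrow> real" and D e R :: real and z :: complex
  assumes finite: "finite A" and nonempty: "A \<noteq> {}"
    and b_pos: "\<And>i. i \<in> A \<Longrightarrow> 0 < b i"
    and r_pos: "\<And>i. i \<in> A \<Longrightarrow> 0 < r i" and r_le: "\<And>i. i \<in> A \<Longrightarrow> r i \<le> R"
    and D_pos: "0 < D" and e_pos: "0 < e" and e_small: "4 * R^2 * e \<le> D"
    and Im_pos: "0 < Im z"
    and secular: "of_real D + of_real e * z^2 = (\<Sum>i\<in>A. of_real (b i) / (z + of_real (r i)))"
begin

abbreviation B :: real where "B \<equiv> \<Sum>i\<in>A. b i"

abbreviation L :: real where "L \<equiv> B / D + R"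

definition d :: "'i \<Rightarrow> real" where "d i = (Re z + r i)^2 + (Im z)^2"

definition S :: real where "S = (\<Sum>i\<in>A. b i / d i)"

definition T :: real where "T = (\<Sum>i\<in>A. b i * (Re z + r i) / d i)"

lemma d_pos: "0 < d i" and Im_sq_le_d: "(Im z)^2 \<le> d i"
  using Im_pos by (auto simp: d_def intro: add_nonneg_pos)

lemma secular_Re: "D + e * ((Re z)^2 - (Im z)^2) = T"
proof -
  have "Re (of_real (b i) / (z + of_real (r i))) = b i * (Re z + r i) / d i" for i
    by (simp add: Re_divide d_def)
  then show ?thesis
    using arg_cong[OF secular, of Re] by (simp add: T_def power2_eq_square)
qed

lemma secular_Im: "2 * e * Re z = - S"
proof -
  have "Im (of_real (b i) / (z + of_real (r i))) = - (Im z * (b i / d i))" for i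
    by (simp add: Im_divide d_def)
  then have "Im z * (2 * e * Re z) = Im z * - S"
    using arg_cong[OF secular, of Im]
    by (simp add: S_def sum_negf sum_distrib_left power2_eq_square algebra_simps)
  then show ?thesis
    using Im_pos by (metis less_irrefl mult_cancel_left)
qed

lemma S_pos: "0 < S"
  unfolding S_def using finite nonempty b_pos d_pos by (intro sum_pos) auto

lemma Re_neg: "Re z < 0"
proof -
  have "e * Re z < 0"
    using secular_Im S_pos by linarith
  then show ?thesis
    using e_pos by (simp add: mult_less_0_iff)
qed

lemma B_pos: "0 < B"
  using finite nonempty b_pos by (intro sum_pos)

lemma R_pos: "0 < R"
  using nonempty r_pos r_le by (meson all_not_in_conv less_le_trans)

lemma T_le: "T \<le> 2 * e * R^2"
proof (cases "Re z \<le> - R")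
  case True
  have "T \<le> 0"
    unfolding T_def
  proof (rule sum_nonpos)
    fix i assume "i \<in> A"
    moreover have "Re z + r i \<le> 0"
      using r_le[OF \<open>i \<in> A\<close>] True by linarith
    ultimately have "b i * (Re z + r i) \<le> 0"
      using b_pos by (simp add: mult_nonneg_nonpos less_imp_le)
    then show "b i * (Re z + r i) / d i \<le> 0"
      using d_pos[of i] by (simp add: divide_nonpos_pos)
  qed
  moreover have "0 \<le> 2 * e * R^2"
    using e_pos by simp
  ultimately show ?thesis
    by linarith
next
  case False
  have "T \<le> (\<Sum>i\<in>A. R * (b i / d i))"
    unfolding T_def
  proof (rule sum_mono)
    fix i assume "i \<in> A"
    then have "b i * (Re z + r i) \<le> b i * R"
      using b_pos[of i] r_le[of i] Re_neg by (intro mult_left_mono) auto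
    then have "b i * (Re z + r i) / d i \<le> b i * R / d i"
      using d_pos[of i] by (intro divide_right_mono) auto
    then show "b i * (Re z + r i) / d i \<le> R * (b i / d i)"
      by (simp add: mult.commute)
  qed
  also have "\<dots> = R * S"
    by (simp only: S_def sum_distrib_left)
  also have "\<dots> = R * (2 * e * - Re z)"
    using secular_Im by simp
  also have "\<dots> \<le> R * (2 * e * R)"
    using False R_pos e_pos by (intro mult_left_mono) auto
  finally show ?thesis
    by (simp add: power2_eq_square algebra_simps)
qed

lemma half_D_le_e_Im_sq: "D / 2 \<le> e * (Im z)^2"
proof -
  have "e * (Im z)^2 = D + e * (Re z)^2 - T"
    using secular_Re by (simp add: algebra_simps)
  moreover have "0 \<le> e * (Re z)^2"
    using e_pos by simp
  moreover have "4 * R^2 * e = 2 * (2 * e * R^2)"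
    by simp
  ultimately show ?thesis
    using T_le e_small by linarith
qed

lemma half_D_div_e_le_d: "D / (2 * e) \<le> d i"
proof -
  have "D \<le> 2 * (e * (Im z)^2)"
    using half_D_le_e_Im_sq by linarith
  also have "\<dots> \<le> 2 * (e * d i)"
    using Im_sq_le_d e_pos by simp
  finally show ?thesis
    using e_pos by (simp add: field_simps)
qed

lemma S_le: "S \<le> 2 * e * B / D"
proof -
  have "S \<le> (\<Sum>i\<in>A. b i * (2 * e / D))"
    unfolding S_def
  proof (rule sum_mono)
    fix i assume "i \<in> A"
    have "1 / d i \<le> 2 * e / D"
      using half_D_div_e_le_d[of i] d_pos[of i] D_pos e_pos by (simp add: field_simps)
    then show "b i / d i \<le> b i * (2 * e / D)"
      using b_pos[OF \<open>i \<in> A\<close>] by (metis less_imp_le mult_left_mono times_divide_eq_right mult.right_neutral)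
  qed
  also have "\<dots> = B * (2 * e / D)"
    by (rule sum_distrib_right [symmetric])
  finally show ?thesis
    by (simp add: ac_simps)
qed

lemma abs_Re_le: "\<bar>Re z\<bar> \<le> B / D"
proof -
  have "- Re z = S / (2 * e)"
    using secular_Im e_pos by (simp add: field_simps)
  also have "\<dots> \<le> B / D"
    using S_le e_pos by (simp add: field_simps)
  finally show ?thesis
    using Re_neg by simp
qed

lemma abs_Re_add_r_le: "i \<in> A \<Longrightarrow> \<bar>Re z + r i\<bar> \<le> L"
  using abs_Re_le r_pos[of i] r_le[of i] unfolding abs_le_iff by linarith

lemma abs_T_le: "\<bar>T\<bar> \<le> 2 * e * B * L / D"
proof -
  have "\<bar>T\<bar> \<le> (\<Sum>i\<in>A. L * (b i / d i))"
    unfolding T_def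
  proof (rule order_trans[OF sum_abs sum_mono])
    fix i assume "i \<in> A"
    have "\<bar>b i * (Re z + r i) / d i\<bar> = (b i / d i) * \<bar>Re z + r i\<bar>"
      using b_pos[OF \<open>i \<in> A\<close>] d_pos[of i] by (simp add: abs_mult)
    also have "\<dots> \<le> (b i / d i) * L"
      using abs_Re_add_r_le[OF \<open>i \<in> A\<close>] b_pos[OF \<open>i \<in> A\<close>] d_pos[of i]
      by (intro mult_left_mono) auto
    finally show "\<bar>b i * (Re z + r i) / d i\<bar> \<le> L * (b i / d i)"
      by (simp only: mult.commute)
  qed
  also have "\<dots> = L * S"
    by (simp add: S_def sum_distrib_left)
  also have "\<dots> \<le> L * (2 * e * B / D)"
    using S_le B_pos R_pos D_pos by (intro mult_left_mono) auto
  finally show ?thesis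
    by (simp add: ac_simps)
qed

lemma abs_Im_sq_minus_le: "\<bar>(Im z)^2 - D / e\<bar> \<le> 3 * L^2"
proof -
  have BD_le: "B / D \<le> L"
    using R_pos by simp
  have "(Re z)^2 \<le> L^2"
    using abs_Re_le BD_le by (metis abs_ge_zero order_trans power2_abs power_mono)
  moreover have "2 * B * L / D \<le> 2 * L^2"
  proof -
    have "B / D * L \<le> L * L"
      using BD_le B_pos D_pos R_pos by (intro mult_right_mono) auto
    then show ?thesis
      by (simp add: power2_eq_square)
  qed
  moreover have "(Im z)^2 - D / e = (Re z)^2 - T / e"
    using secular_Re e_pos by (simp add: field_simps)
  moreover have "\<bar>T / e\<bar> \<le> 2 * B * L / D"
    using abs_T_le e_pos by (simp add: field_simps)
  ultimately show ?thesis
    using zero_le_power2[of "Re z"] unfolding abs_le_iff by linarith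
qed

lemma abs_e_d_minus_D_le:
  assumes "i \<in> A"
  shows "\<bar>e * d i - D\<bar> \<le> 4 * e * L^2"
proof -
  have "e * d i - D = e * (Re z + r i)^2 + e * ((Im z)^2 - D / e)"
    using e_pos by (simp add: d_def field_simps)
  moreover have "(Re z + r i)^2 \<le> L^2"
    using abs_Re_add_r_le[OF assms] by (metis abs_ge_zero power2_abs power_mono)
  then have "e * (Re z + r i)^2 \<le> e * L^2"
    using e_pos by simp
  moreover have "\<bar>e * ((Im z)^2 - D / e)\<bar> \<le> e * (3 * L^2)"
    using abs_Im_sq_minus_le e_pos by (simp add: abs_mult)
  moreover have "0 \<le> e * (Re z + r i)^2"
    using e_pos by simp
  ultimately show ?thesis
    unfolding abs_le_iff by linarith
qed

lemma abs_e_div_D_minus_inverse_d_le: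
  assumes "i \<in> A"
  shows "\<bar>e / D - 1 / d i\<bar> \<le> 8 * e^2 * L^2 / D^2"
proof -
  have "e / D - 1 / d i = (e * d i - D) / (D * d i)"
    using D_pos d_pos[of i] by (simp add: field_simps)
  then have "\<bar>e / D - 1 / d i\<bar> = \<bar>e * d i - D\<bar> / (D * d i)"
    using D_pos d_pos[of i] by (simp add: abs_divide abs_mult)
  also have "\<dots> \<le> 4 * e * L^2 / (D^2 / (2 * e))"
  proof (rule frac_le)
    show "D^2 / (2 * e) \<le> D * d i"
      using half_D_div_e_le_d[of i] D_pos by (simp add: power2_eq_square divide_simps)
  qed (use abs_e_d_minus_D_le[OF assms] D_pos e_pos in auto)
  also have "\<dots> = 8 * e^2 * L^2 / D^2"
    using e_pos by (simp add: field_simps power2_eq_square)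
  finally show ?thesis .
qed

lemma abs_Re_plus_le: "\<bar>Re z + B / (2 * D)\<bar> \<le> 4 * B * L^2 * e / D^2"
proof -
  have "S = - (2 * e * Re z)"
    using secular_Im by simp
  then have Re_eq: "Re z + B / (2 * D) = (B * e / D - S) / (2 * e)"
    using e_pos D_pos by (simp add: field_simps)
  have "B * e / D - S = (\<Sum>i\<in>A. b i * (e / D - 1 / d i))"
    by (simp add: S_def right_diff_distrib sum_subtractf sum_distrib_right sum_divide_distrib)
  also have "\<bar>\<dots>\<bar> \<le> (\<Sum>i\<in>A. b i * (8 * e^2 * L^2 / D^2))"
  proof (rule order_trans[OF sum_abs sum_mono])
    fix i assume "i \<in> A"
    then have "b i * \<bar>e / D - 1 / d i\<bar> \<le> b i * (8 * e^2 * L^2 / D^2)"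
      using b_pos abs_e_div_D_minus_inverse_d_le by (intro mult_left_mono) (auto intro: less_imp_le)
    then show "\<bar>b i * (e / D - 1 / d i)\<bar> \<le> b i * (8 * e^2 * L^2 / D^2)"
      using b_pos[OF \<open>i \<in> A\<close>] by (simp add: abs_mult)
  qed
  also have "\<dots> = B * (8 * e^2 * L^2 / D^2)"
    by (rule sum_distrib_right [symmetric])
  finally have "\<bar>B * e / D - S\<bar> / (2 * e) \<le> B * (8 * e^2 * L^2 / D^2) / (2 * e)"
    using e_pos by (intro divide_right_mono) auto
  also have "\<dots> = 4 * B * L^2 * e / D^2"
    using e_pos D_pos by (simp add: field_simps power2_eq_square del: add_divide_distrib)
  finally show ?thesis
    using e_pos by (simp add: Re_eq abs_divide)
qed

end

lemma abs_diff_le_of_abs_square_diff_le: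
  fixes y c K :: real
  assumes "0 \<le> y" and "0 < c" and "\<bar>y^2 - c^2\<bar> \<le> K"
  shows "\<bar>y - c\<bar> \<le> K / c"
proof -
  have "\<bar>y - c\<bar> * c \<le> \<bar>y - c\<bar> * (y + c)"
    using assms(1) by (intro mult_left_mono) auto
  also have "\<dots> = \<bar>(y - c) * (y + c)\<bar>"
    using assms(1,2) by (simp add: abs_mult)
  also have "\<dots> = \<bar>y^2 - c^2\<bar>"
    by (simp add: power2_eq_square algebra_simps)
  finally show ?thesis
    using assms(2,3) by (simp add: field_simps)
qed

lemma PNk_upper_root_estimates:
  fixes N k :: nat and D R :: real and b r :: "nat \<Rightarrow> real" and z :: complex
  assumes "N \<ge> 1" and "0 < D" and "\<forall>i\<in>{1..N}. 0 < b i"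
    and "\<forall>i\<in>{1..N}. 0 < r i \<and> r i \<le> R"
    and "k \<ge> 1" and "4 * R^2 \<le> D * k"
    and "poly (map_poly complex_of_real (PNk N D b r k)) z = 0" and "0 < Im z"
  defines "B \<equiv> \<Sum>j\<in>{1..N}. b j"
  defines "L \<equiv> B / D + R"
  shows "\<bar>Re z + B / (2 * D)\<bar> \<le> (4 * B * L^2 / D^2) / (real k)^2"
    and "\<bar>Im z - (2 * real k - 1) * sqrt D\<bar> \<le> (3 * L^2 / sqrt D) / (2 * real k - 1)"
proof -
  define s where "s = 2 * real k - 1"
  define e where "e = 1 / s^2"
  have s_ge: "real k \<le> s" "1 \<le> s"
    using \<open>k \<ge> 1\<close> by (auto simp: s_def)
  have "s * 1 \<le> s * s"
    using s_ge by (intro mult_left_mono) auto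
  then have "real k \<le> s^2"
    using s_ge unfolding power2_eq_square by linarith
  then have "D * real k \<le> D * s^2"
    using assms(2) by simp
  then have "4 * R^2 \<le> D * s^2"
    using assms(6) by linarith
  then have "4 * R^2 * e \<le> D"
    using s_ge by (simp add: e_def field_simps)
  then interpret upper_secular_root "{1..N}" b r D e R z
    using assms PNk_root_secular[OF assms(7)] by unfold_locales (auto simp: e_def s_def)
  have "e \<le> 1 / (real k)^2"
    using s_ge \<open>k \<ge> 1\<close> unfolding e_def by (intro divide_left_mono power_mono) auto
  then have "(4 * B * L^2 / D^2) * e \<le> (4 * B * L^2 / D^2) * (1 / (real k)^2)"
    using B_pos D_pos by (intro mult_left_mono) (auto simp: B_def)
  then show "\<bar>Re z + B / (2 * D)\<bar> \<le> (4 * B * L^2 / D^2) / (real k)^2"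
    using abs_Re_plus_le unfolding B_def L_def by simp
  have "D / e = (s * sqrt D)^2"
    using assms(2) by (simp add: e_def power_mult_distrib)
  then have "\<bar>Im z - s * sqrt D\<bar> \<le> 3 * L^2 / (s * sqrt D)"
    using abs_Im_sq_minus_le Im_pos s_ge assms(2) unfolding B_def L_def
    by (intro abs_diff_le_of_abs_square_diff_le) auto
  then show "\<bar>Im z - (2 * real k - 1) * sqrt D\<bar> \<le> (3 * L^2 / sqrt D) / (2 * real k - 1)"
    by (simp add: s_def mult.commute)
qed

theorem lemma4p3:
  fixes N k0 :: nat and D :: real and b r :: "nat \<Rightarrow> real"
  assumes "N \<ge> 1" and "D > 0"
    and "\<forall>i\<in>{1..N}. b i > 0"
    and "r 1 > 0" and "\<forall>i\<in>{1..N}. \<forall>j\<in>{1..N}. i < j \<longrightarrow> r i < r j"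
    and "k0 \<ge> 1"
    and "\<forall>k\<ge>k0. root_structure N r (PNk N D b r k)"
  shows "\<exists>M2 > 0. \<exists>M3 > 0. \<exists>K\<ge>k0. \<forall>k\<ge>K. \<forall>z :: complex.
           poly (map_poly complex_of_real (PNk N D b r k)) z = 0 \<and> Im z > 0 \<longrightarrow>
             \<bar>Re z + (\<Sum>j\<in>{1..N}. b j) / (2 * D)\<bar> \<le> M2 / (real k)^2 \<and>
             \<bar>Im z - (2 * real k - 1) * sqrt D\<bar> \<le> M3 / (2 * real k - 1)"
proof -
  define B where "B = (\<Sum>j\<in>{1..N}. b j)"
  define L where "L = B / D + r N"
  define K where "K = max k0 (nat \<lceil>4 * (r N)^2 / D\<rceil>)"
  have r_bounds: "\<forall>i\<in>{1..N}. 0 < r i \<and> r i \<le> r N"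
  proof
    fix i assume i: "i \<in> {1..N}"
    have "r 1 \<le> r i" and "r i \<le> r N"
      using assms(5) i \<open>N \<ge> 1\<close> by (auto simp: le_less)
    then show "0 < r i \<and> r i \<le> r N"
      using assms(4) by simp
  qed
  have "0 < B"
    using assms(1,3) unfolding B_def by (intro sum_pos) auto
  then have "0 < L"
    using assms(1,2) r_bounds by (simp add: L_def add_pos_pos)
  have "4 * (r N)^2 \<le> D * real k" if "K \<le> k" for k
    using that assms(2) unfolding K_def by (simp add: field_simps)
  then have "\<forall>k\<ge>K. \<forall>z :: complex.
           poly (map_poly complex_of_real (PNk N D b r k)) z = 0 \<and> Im z > 0 \<longrightarrow>
             \<bar>Re z + B / (2 * D)\<bar> \<le> (4 * B * L^2 / D^2) / (real k)^2 \<and>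
             \<bar>Im z - (2 * real k - 1) * sqrt D\<bar> \<le> (3 * L^2 / sqrt D) / (2 * real k - 1)"
    using PNk_upper_root_estimates[OF assms(1-3) r_bounds] assms(6)
    unfolding K_def B_def L_def by auto
  moreover have "0 < 4 * B * L^2 / D^2" and "0 < 3 * L^2 / sqrt D"
    using \<open>0 < B\<close> \<open>0 < L\<close> assms(2) by auto
  moreover have "k0 \<le> K"
    by (simp add: K_def)
  ultimately show ?thesis
    unfolding B_def by blast
qed

end
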